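(* For every integer $q\ge 3$, the length (number of edges) of a longest path in the mirror full binary tree $M_q$ is exactly $2q^2$.
   Context: Let $B_q$ be a full binary tree of height $q$ with vertices $b_{\ell,1},\dots,b_{\ell,2^\ell}$ on level $\ell\in\{0,\dots,q\}$, where for $\ell<q$ the vertex $b_{\ell,i}$ is adjacent to its children $b_{\ell+1,2i-1}$ and $b_{\ell+1,2i}$; let $R_q$ be a disjoint copy with vertices $r_{\ell,i}$ defined analogously. The mirror full binary tree $M_q$ is the graph obtained from the disjoint union of $B_q$ and $R_q$ by identifying $b_{q,i}$ with $r_{q,i}$ for every $i\in\{1,\dots,2^q\}$. A path is a sequence of distinct vertices with consecutive vertices adjacent; its length is its number of edges. *)

theory Defs
  imports Main
begin

text \<open>Vertices of the disjoint union B_q + R_q: (tree, level, index), index in 1..2^level.\<close>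
datatype tree_side = Blue | Red

type_synonym mvert = "tree_side \<times> nat \<times> nat"

text \<open>Quotient map identifying b_{q,i} with r_{q,i}: leaves are represented by their blue copy.\<close>
definition canon :: "nat \<Rightarrow> mvert \<Rightarrow> mvert" where
  "canon q v = (case v of (s, l, i) \<Rightarrow> if l = q then (Blue, l, i) else (s, l, i))"

definition union_verts :: "nat \<Rightarrow> mvert set" where
  "union_verts q = {(s, l, i). l \<le> q \<and> 1 \<le> i \<and> i \<le> 2 ^ l}"

definition mirror_verts :: "nat \<Rightarrow> mvert set" where
  "mirror_verts q = canon q ` union_verts q"

definition mirror_adj :: "nat \<Rightarrow> mvert \<Rightarrow> mvert \<Rightarrow> bool" where
  "mirror_adj q u v \<longleftrightarrow>
     (\<exists>s l i j. l < q \<and> 1 \<le> i \<and> i \<le> 2 ^ l \<and> (j = 2 * i - 1 \<or> j = 2 * i) \<and>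
        ({u, v} = {canon q (s, l, i), canon q (s, Suc l, j)}))"

definition mirror_path :: "nat \<Rightarrow> mvert list \<Rightarrow> bool" where
  "mirror_path q p \<longleftrightarrow> p \<noteq> [] \<and> distinct p \<and> set p \<subseteq> mirror_verts q \<and>
     (\<forall>k. Suc k < length p \<longrightarrow> mirror_adj q (p ! k) (p ! Suc k))"

definition path_len :: "'a list \<Rightarrow> nat" where
  "path_len p = length p - 1"

end

theory Submission
  imports Defs
begin

text \<open>Below a vertex of level l sits a copy of the mirror tree of height h = q - l: the blue
and the red copy of the vertex (its two roots) and everything under them. Deleting the two roots
leaves the two copies of height h - 1 below the children, and these are attached to the rest only
by the edges from their roots to the root of the same colour. So a path avoiding both roots stays
below one child, and the roots cut every path into pieces each lying below a single child.
Induction on h then bounds the number of vertices of a path joining the two roots by 2h + 1, of a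
path starting at a root by (h + 1)^2, and of an arbitrary path by 2h^2 + 1 for h \<ge> 2;
in the last case, if both roots are used, the two outer pieces lie below the same child and start
at its two roots. Conversely, the path that goes down and up again below the left child, crosses
to the other root and continues recursively below the right child has (h + 1)^2 vertices, and
two such paths joined at the blue top root have 2q^2 + 1.\<close>

fun other_side :: "tree_side \<Rightarrow> tree_side" where
  "other_side Blue = Red"
| "other_side Red = Blue"

lemma other_side_other_side [simp]: "other_side (other_side s) = s"
  by (cases s) auto

lemma other_side_neq [simp]: "other_side s \<noteq> s" "s \<noteq> other_side s"
  by (cases s; simp)+

lemma insert_other_side: "{(s, l, i), (other_side s, l, i)} = {(Blue, l, i), (Red, l, i)}"
  by (cases s) auto

lemma canon_conv: "canon q (s, l, i) = (if l = q then (Blue, l, i) else (s, l, i))"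
  by (simp add: canon_def)

lemma canon_below_leaves [simp]: "l < q \<Longrightarrow> canon q (s, l, i) = (s, l, i)"
  by (simp add: canon_conv)

lemma mem_mirror_verts_iff:
  "(s, l, i) \<in> mirror_verts q \<longleftrightarrow> l \<le> q \<and> 1 \<le> i \<and> i \<le> 2 ^ l \<and> (l = q \<longrightarrow> s = Blue)"
proof
  assume "(s, l, i) \<in> mirror_verts q"
  then obtain s' where "(s', l, i) \<in> union_verts q" "(s, l, i) = canon q (s', l, i)"
    unfolding mirror_verts_def by (auto simp: canon_conv split: if_splits)
  then show "l \<le> q \<and> 1 \<le> i \<and> i \<le> 2 ^ l \<and> (l = q \<longrightarrow> s = Blue)"
    by (auto simp: union_verts_def canon_conv split: if_splits)
next
  assume "l \<le> q \<and> 1 \<le> i \<and> i \<le> 2 ^ l \<and> (l = q \<longrightarrow> s = Blue)"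
  then have "(s, l, i) = canon q (s, l, i)" "(s, l, i) \<in> union_verts q"
    by (auto simp: canon_conv union_verts_def)
  then show "(s, l, i) \<in> mirror_verts q"
    unfolding mirror_verts_def by blast
qed

lemma finite_mirror_verts: "finite (mirror_verts q)"
proof -
  have "union_verts q \<subseteq> {Blue, Red} \<times> {..q} \<times> {..2 ^ q}"
  proof
    fix v assume "v \<in> union_verts q"
    then obtain s l i where v: "v = (s, l, i)" "l \<le> q" "i \<le> 2 ^ l"
      by (auto simp: union_verts_def)
    then have "i \<le> 2 ^ q"
      using power_increasing[of l q "2::nat"] by linarith
    with v show "v \<in> {Blue, Red} \<times> {..q} \<times> {..2 ^ q}"
      by (cases s) auto
  qed
  then have "finite (union_verts q)"
    by (rule finite_subset) simp
  then show ?thesis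
    by (simp add: mirror_verts_def)
qed

definition children :: "nat \<Rightarrow> nat set" where
  "children i = {2 * i - 1, 2 * i}"

lemma children_pos: "1 \<le> i \<Longrightarrow> c \<in> children i \<Longrightarrow> 1 \<le> c"
  by (auto simp: children_def)

lemma children_le: "i \<le> 2 ^ l \<Longrightarrow> c \<in> children i \<Longrightarrow> c \<le> 2 ^ Suc l"
  by (auto simp: children_def)

lemma children_div2: "1 \<le> i \<Longrightarrow> c \<in> children i \<Longrightarrow> (c - 1) div 2 = i - 1"
  by (auto simp: children_def)

lemma mirror_adj_commute: "mirror_adj q u v \<longleftrightarrow> mirror_adj q v u"
  unfolding mirror_adj_def by (simp add: insert_commute)

lemma mirror_adjE:
  assumes "mirror_adj q u v"
  obtains s l i c where "l < q" "1 \<le> i" "i \<le> 2 ^ l" "c \<in> children i"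
    "{u, v} = {canon q (s, l, i), canon q (s, Suc l, c)}"
  using assms unfolding mirror_adj_def children_def by blast

lemma mirror_adj_downI:
  "l < q \<Longrightarrow> 1 \<le> i \<Longrightarrow> i \<le> 2 ^ l \<Longrightarrow> c \<in> children i
    \<Longrightarrow> mirror_adj q (s, l, i) (canon q (s, Suc l, c))"
  unfolding mirror_adj_def children_def
  by (rule exI[of _ s], rule exI[of _ l], rule exI[of _ i], rule exI[of _ c]) auto

lemma mirror_adj_levels:
  assumes "mirror_adj q (s, l, i) (s', l', i')"
  shows "l' = Suc l \<or> l = Suc l'"
  using assms by (elim mirror_adjE) (auto simp: doubleton_eq_iff canon_conv split: if_splits)

lemma not_mirror_adj_same_level: "\<not> mirror_adj q (s, l, i) (s', l, i')"
  using mirror_adj_levels by fastforce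

text \<open>A vertex (l', i') lies below (l, i) iff its ancestor on level l, which has index
(i' - 1) div 2 ^ (l' - l) + 1, is (l, i).\<close>

definition subtree :: "nat \<Rightarrow> nat \<Rightarrow> nat \<Rightarrow> mvert set" where
  "subtree q l i = {(s, l', i'). (s, l', i') \<in> mirror_verts q \<and> l \<le> l' \<and> (i' - 1) div 2 ^ (l' - l) = i - 1}"

lemma mem_subtree_iff [simp]:
  "(s, l', i') \<in> subtree q l i \<longleftrightarrow> (s, l', i') \<in> mirror_verts q \<and> l \<le> l' \<and> (i' - 1) div 2 ^ (l' - l) = i - 1"
  by (simp add: subtree_def)

lemma subtree_top: "subtree q 0 1 = mirror_verts q"
  by (auto simp: subtree_def mem_mirror_verts_iff)

lemma subtree_leaf: "1 \<le> i \<Longrightarrow> subtree q q i \<subseteq> {(Blue, q, i)}"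
  by (auto simp: subtree_def mem_mirror_verts_iff)

lemma canon_mem_subtree: "l \<le> q \<Longrightarrow> 1 \<le> i \<Longrightarrow> i \<le> 2 ^ l \<Longrightarrow> canon q (s, l, i) \<in> subtree q l i"
  by (auto simp: canon_conv mem_mirror_verts_iff)

lemma subtree_disjoint:
  assumes "1 \<le> j" "1 \<le> j'" "j \<noteq> j'"
  shows "subtree q m j \<inter> subtree q m j' = {}"
  using assms by (auto simp: subtree_def)

lemma div_pow2_Suc: "(n::nat) div 2 ^ Suc k = n div 2 ^ k div 2"
  by (simp only: power_Suc2 div_mult2_eq)

lemma subtree_child_subset:
  assumes "1 \<le> i" "c \<in> children i"
  shows "subtree q (Suc l) c \<subseteq> subtree q l i"
proof
  fix v assume "v \<in> subtree q (Suc l) c"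
  then obtain s l' i' where v: "v = (s, l', i')" "(s, l', i') \<in> mirror_verts q" "Suc l \<le> l'"
      "(i' - 1) div 2 ^ (l' - Suc l) = c - 1"
    by (cases v) auto
  then have "(i' - 1) div 2 ^ (l' - l) = (c - 1) div 2"
    using div_pow2_Suc[of "i' - 1" "l' - Suc l"] by (simp add: Suc_diff_Suc)
  with v children_div2[OF assms] show "v \<in> subtree q l i"
    by simp
qed

lemma mem_subtree_same_level: "1 \<le> i \<Longrightarrow> (s, l, i') \<in> subtree q l i \<Longrightarrow> i' = i"
  by (simp add: mem_mirror_verts_iff, linarith)

lemma subtree_below_roots:
  assumes "1 \<le> i" "v \<in> subtree q l i" "v \<notin> {(Blue, l, i), (Red, l, i)}"
  shows "\<exists>c \<in> children i. v \<in> subtree q (Suc l) c"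
proof -
  obtain s l' i' where v: "v = (s, l', i')" "(s, l', i') \<in> mirror_verts q" "l \<le> l'"
      "(i' - 1) div 2 ^ (l' - l) = i - 1"
    using assms(2) by (cases v) auto
  have "l' \<noteq> l"
  proof
    assume "l' = l"
    with v assms(1,2) have "i' = i"
      using mem_subtree_same_level by blast
    with v \<open>l' = l\<close> assms(3) show False
      by (cases s) auto
  qed
  define t where "t = (i' - 1) div 2 ^ (l' - Suc l)"
  have "t div 2 = i - 1"
    using v \<open>l' \<noteq> l\<close> div_pow2_Suc[of "i' - 1" "l' - Suc l"]
    by (simp add: t_def Suc_diff_Suc)
  then have "Suc t \<in> children i"
    using assms(1) by (auto simp: children_def)
  moreover have "v \<in> subtree q (Suc l) (Suc t)"
    using v \<open>l' \<noteq> l\<close> by (simp add: t_def)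
  ultimately show ?thesis
    by blast
qed

lemma child_ancestor:
  assumes "1 \<le> i" "c \<in> children i" "m \<le> l"
  shows "(c - 1) div 2 ^ (Suc l - m) = (i - 1) div 2 ^ (l - m)"
proof -
  have "(c - 1) div 2 ^ (Suc l - m) = (c - 1) div 2 div 2 ^ (l - m)"
    using assms(3) by (simp add: Suc_diff_le div_mult2_eq)
  then show ?thesis
    using children_div2[OF assms(1,2)] by simp
qed

lemma mirror_adj_leaving_subtree:
  assumes "mirror_adj q u v" "u \<in> subtree q m j" "v \<notin> subtree q m j" "1 \<le> j"
  obtains s l i where "m = Suc l" "u = canon q (s, Suc l, j)" "v = canon q (s, l, i)"
proof -
  obtain s l i c where e: "l < q" "1 \<le> i" "i \<le> 2 ^ l" "c \<in> children i"
      "{u, v} = {canon q (s, l, i), canon q (s, Suc l, c)}"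
    using assms(1) by (elim mirror_adjE)
  define s' where "s' = (if Suc l = q then Blue else s)"
  have parent: "canon q (s, l, i) = (s, l, i)" "(s, l, i) \<in> mirror_verts q"
    using e by (auto simp: mem_mirror_verts_iff)
  have child: "canon q (s, Suc l, c) = (s', Suc l, c)" "(s', Suc l, c) \<in> mirror_verts q"
    using e children_pos[OF e(2,4)] children_le[OF e(3,4)]
    by (auto simp: s'_def canon_conv mem_mirror_verts_iff)
  have same: "(s, l, i) \<in> subtree q m j \<longleftrightarrow> (s', Suc l, c) \<in> subtree q m j" if "m \<le> l"
    using parent child that child_ancestor[OF e(2,4) that] by simp
  show thesis
  proof (cases "u = canon q (s, l, i)")
    case True
    then have "v = canon q (s, Suc l, c)"
      using e(5) child parent by (auto simp: doubleton_eq_iff)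
    then show thesis
      using assms(2,3) True same parent child by auto
  next
    case False
    then have uv: "u = (s', Suc l, c)" "v = (s, l, i)"
      using e(5) child parent by (auto simp: doubleton_eq_iff)
    then have "m = Suc l"
      using assms(2,3) same by (cases "m \<le> l") auto
    moreover from this have "c = j"
      using uv assms(2,4) children_pos[OF e(2,4)] by simp linarith
    ultimately show thesis
      using that uv child parent by metis
  qed
qed

lemma mirror_adj_root_child:
  assumes "l < q" "mirror_adj q (s, l, i) v" "v \<in> subtree q (Suc l) c" "1 \<le> c"
  shows "v = canon q (s, Suc l, c)"
proof -
  have "(s, l, i) \<notin> subtree q (Suc l) c"
    by simp
  then obtain s' l' i' where "Suc l = Suc l'" "v = canon q (s', Suc l', c)" "(s, l, i) = canon q (s', l', i')"
    using mirror_adj_leaving_subtree assms(2-4) mirror_adj_commute by metis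
  with assms(1) show ?thesis
    by simp
qed

lemma walk_below_roots:
  assumes "1 \<le> i" "successively (mirror_adj q) xs" "xs \<noteq> []"
    "set xs \<subseteq> subtree q l i - {(Blue, l, i), (Red, l, i)}"
  shows "\<exists>c \<in> children i. set xs \<subseteq> subtree q (Suc l) c"
  using assms(2-4)
proof (induction xs)
  case (Cons x xs)
  obtain c' where c': "c' \<in> children i" "x \<in> subtree q (Suc l) c'"
    using subtree_below_roots[OF assms(1), of x q l] Cons.prems(3) by auto
  show ?case
  proof (cases "xs = []")
    case True
    then show ?thesis
      using c' by auto
  next
    case False
    then obtain c where c: "c \<in> children i" "set xs \<subseteq> subtree q (Suc l) c"
      using Cons by (auto simp: successively_Cons)
    have "x \<in> subtree q (Suc l) c"
    proof (rule ccontr)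
      assume "x \<notin> subtree q (Suc l) c"
      moreover have "mirror_adj q (hd xs) x" "hd xs \<in> subtree q (Suc l) c"
        using Cons.prems(1) False c(2) by (auto simp: successively_Cons mirror_adj_commute)
      ultimately obtain s' i' where "x = canon q (s', l, i')"
        using mirror_adj_leaving_subtree children_pos[OF assms(1) c(1)] by (metis Suc_inject)
      then obtain s'' where "x = (s'', l, i')"
        by (cases "l = q") (auto simp: canon_conv)
      moreover have "x \<in> subtree q l i"
        using Cons.prems(3) by simp
      ultimately have "x \<in> {(Blue, l, i), (Red, l, i)}"
        using mem_subtree_same_level[OF assms(1)] by (cases s'') auto
      then show False
        using Cons.prems(3) by simp
    qed
    then show ?thesis
      using c by auto
  qed
qed simp

definition subtree_path :: "nat \<Rightarrow> nat \<Rightarrow> nat \<Rightarrow> mvert list \<Rightarrow> bool" where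
  "subtree_path q l i p \<longleftrightarrow>
     p \<noteq> [] \<and> distinct p \<and> set p \<subseteq> subtree q l i \<and> successively (mirror_adj q) p"

lemma mirror_path_iff_subtree_path: "mirror_path q p \<longleftrightarrow> subtree_path q 0 1 p"
  using subtree_top[of q]
  by (simp add: mirror_path_def subtree_path_def successively_conv_nth)

lemma subtree_path_rev: "subtree_path q l i (rev p) \<longleftrightarrow> subtree_path q l i p"
  by (simp add: subtree_path_def mirror_adj_commute)

lemma subtree_path_singleton [simp]: "subtree_path q l i [v] \<longleftrightarrow> v \<in> subtree q l i"
  by (simp add: subtree_path_def)

lemma subtree_path_append_iff:
  assumes "xs \<noteq> []" "ys \<noteq> []"
  shows "subtree_path q l i (xs @ ys) \<longleftrightarrow> subtree_path q l i xs \<and> subtree_path q l i ys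
    \<and> set xs \<inter> set ys = {} \<and> mirror_adj q (last xs) (hd ys)"
  using assms by (auto simp: subtree_path_def successively_append_iff)

lemma subtree_path_infix:
  "subtree_path q l i (xs @ ys @ zs) \<Longrightarrow> ys \<noteq> [] \<Longrightarrow> subtree_path q l i ys"
  by (auto simp: subtree_path_def successively_append_iff)

lemma subtree_path_leaf:
  assumes "1 \<le> i" "subtree_path q q i p"
  shows "p = [(Blue, q, i)]"
proof -
  have "set p \<subseteq> {(Blue, q, i)}" "p \<noteq> []" "distinct p"
    using assms subtree_leaf[of i q] by (auto simp: subtree_path_def)
  then have "set p = {(Blue, q, i)}"
    by (metis set_empty subset_singletonD)
  with \<open>distinct p\<close> have "length p = 1"
    by (metis distinct_card is_singletonI is_singleton_altdef)
  with \<open>set p = {(Blue, q, i)}\<close> show ?thesis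
    by (cases p) auto
qed

lemma hd_last_decomp: "xs \<noteq> [] \<Longrightarrow> hd xs \<noteq> last xs \<Longrightarrow> \<exists>ys. xs = hd xs # ys @ [last xs]"
  by (metis append_butlast_last_id butlast.simps(2) last_ConsL last_ConsR list.collapse)

lemma subtree_path_below_root:
  assumes "l < q" "1 \<le> i" "subtree_path q l i ((s, l, i) # xs)" "xs \<noteq> []"
    "(other_side s, l, i) \<notin> set xs"
  obtains c where "c \<in> children i" "subtree_path q (Suc l) c xs" "hd xs = canon q (s, Suc l, c)"
proof -
  have xs: "distinct xs" "set xs \<subseteq> subtree q l i - {(Blue, l, i), (Red, l, i)}"
      "successively (mirror_adj q) xs" "mirror_adj q (s, l, i) (hd xs)"
    using assms(3-5) insert_other_side[of s l i] by (auto simp: subtree_path_def successively_Cons)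
  then obtain c where c: "c \<in> children i" "set xs \<subseteq> subtree q (Suc l) c"
    using walk_below_roots[OF assms(2)] assms(4) by blast
  moreover have "hd xs = canon q (s, Suc l, c)"
    using mirror_adj_root_child[OF assms(1) xs(4)] c hd_in_set[OF assms(4)] children_pos[OF assms(2)]
    by blast
  ultimately show thesis
    using that xs assms(4) by (simp add: subtree_path_def)
qed

lemma subtree_path_between_roots:
  assumes "l < q" "1 \<le> i" "subtree_path q l i ((s, l, i) # z @ [(other_side s, l, i)])"
  obtains c where "c \<in> children i" "subtree_path q (Suc l) c z"
    "hd z = canon q (s, Suc l, c)" "last z = canon q (other_side s, Suc l, c)"
proof -
  have z: "subtree_path q l i ((s, l, i) # z)" "(other_side s, l, i) \<notin> set z"
      "mirror_adj q (last ((s, l, i) # z)) (other_side s, l, i)"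
    using assms(3) subtree_path_append_iff[of "(s, l, i) # z" "[(other_side s, l, i)]"] by auto
  have "z \<noteq> []"
    using z(3) not_mirror_adj_same_level by fastforce
  then obtain c where c: "c \<in> children i" "subtree_path q (Suc l) c z" "hd z = canon q (s, Suc l, c)"
    using subtree_path_below_root[OF assms(1,2) z(1)] z(2) by blast
  moreover have "last z \<in> subtree q (Suc l) c"
    using c(2) \<open>z \<noteq> []\<close> by (auto simp: subtree_path_def)
  then have "last z = canon q (other_side s, Suc l, c)"
    using mirror_adj_root_child[OF assms(1)] z(3) \<open>z \<noteq> []\<close> children_pos[OF assms(2) c(1)]
    by (simp add: mirror_adj_commute)
  ultimately show thesis
    using that by blast
qed

lemma length_below_root_le:
  assumes "l < q" "1 \<le> i" "subtree_path q l i ((s, l, i) # xs)" "(other_side s, l, i) \<notin> set xs"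
    and child_bound: "\<And>c p. c \<in> children i \<Longrightarrow> subtree_path q (Suc l) c p
      \<Longrightarrow> hd p = canon q (s, Suc l, c) \<Longrightarrow> length p \<le> n"
  shows "length xs \<le> n"
proof (cases "xs = []")
  case False
  then show ?thesis
    using subtree_path_below_root[OF assms(1-3) False assms(4)] child_bound by metis
qed simp

lemma root_to_root_length_le:
  assumes "q = l + h" "1 \<le> i" "subtree_path q l i p"
    "hd p = canon q (s, l, i)" "last p = canon q (other_side s, l, i)"
  shows "length p \<le> 2 * h + 1"
  using assms
proof (induction h arbitrary: l i p s)
  case 0
  then show ?case
    using subtree_path_leaf by fastforce
next
  case (Suc h)
  then have "l < q"
    by simp
  moreover have "p \<noteq> []"
    using Suc.prems(3) by (simp add: subtree_path_def)
  ultimately obtain z where p: "p = (s, l, i) # z @ [(other_side s, l, i)]"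
    using hd_last_decomp[of p] Suc.prems(4,5) by force
  then obtain c where "c \<in> children i" "subtree_path q (Suc l) c z"
      "hd z = canon q (s, Suc l, c)" "last z = canon q (other_side s, Suc l, c)"
    using subtree_path_between_roots \<open>l < q\<close> Suc.prems(2,3) by metis
  then have "length z \<le> 2 * h + 1"
    using Suc.IH[of "Suc l" c z s] Suc.prems(1) children_pos[OF Suc.prems(2)] by simp
  then show ?case
    using p by simp
qed

lemma rooted_path_length_le:
  assumes "q = l + h" "1 \<le> i" "subtree_path q l i p" "hd p = canon q (s, l, i)"
  shows "length p \<le> (h + 1)\<^sup>2"
  using assms
proof (induction h arbitrary: l i p s)
  case 0
  then show ?case
    using subtree_path_leaf by fastforce
next
  case (Suc h)
  have "l < q"
    using Suc.prems(1) by simp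
  have branch: "length ys \<le> (h + 1)\<^sup>2"
    if "subtree_path q l i ((t, l, i) # ys)" "(other_side t, l, i) \<notin> set ys" for t ys
  proof (rule length_below_root_le[OF \<open>l < q\<close> Suc.prems(2) that])
    fix c p'
    assume "c \<in> children i" "subtree_path q (Suc l) c p'" "hd p' = canon q (t, Suc l, c)"
    then show "length p' \<le> (h + 1)\<^sup>2"
      using Suc.IH[of "Suc l" c p' t] Suc.prems(1) children_pos[OF Suc.prems(2)] by simp
  qed
  obtain xs where p: "p = (s, l, i) # xs"
    using Suc.prems(3,4) \<open>l < q\<close> by (cases p) (auto simp: subtree_path_def)
  show ?case
  proof (cases "(other_side s, l, i) \<in> set xs")
    case False
    then have "length xs \<le> (h + 1)\<^sup>2"
      using branch Suc.prems(3) p by blast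
    then show ?thesis
      using p by (simp add: power2_eq_square)
  next
    case True
    then obtain z y where xs: "xs = z @ (other_side s, l, i) # y"
      by (meson split_list)
    have loop: "subtree_path q l i ((s, l, i) # z @ [(other_side s, l, i)])"
      using subtree_path_infix[of q l i "[]"] Suc.prems(3) p xs by simp
    have "length ((s, l, i) # z @ [(other_side s, l, i)]) \<le> 2 * Suc h + 1"
      using root_to_root_length_le[OF _ Suc.prems(2) loop, of "Suc h" s] Suc.prems(1) \<open>l < q\<close>
      by simp
    moreover have "length y \<le> (h + 1)\<^sup>2"
    proof (rule branch)
      show "subtree_path q l i ((other_side s, l, i) # y)"
        using subtree_path_infix[of q l i "(s, l, i) # z" _ "[]"] Suc.prems(3) p xs by simp
      show "(other_side (other_side s), l, i) \<notin> set y"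
        using Suc.prems(3) p xs by (simp add: subtree_path_def)
    qed
    ultimately show ?thesis
      using p xs by (simp add: power2_eq_square)
  qed
qed

lemma branch_length_le:
  assumes "q = Suc l + h" "1 \<le> i" "subtree_path q l i ((t, l, i) # xs)" "(other_side t, l, i) \<notin> set xs"
  shows "length xs \<le> (h + 1)\<^sup>2"
proof (rule length_below_root_le[OF _ assms(2-4)])
  show "l < q"
    using assms(1) by simp
  fix c p
  assume "c \<in> children i" "subtree_path q (Suc l) c p" "hd p = canon q (t, Suc l, c)"
  then show "length p \<le> (h + 1)\<^sup>2"
    using rooted_path_length_le[of q "Suc l" h c p t] assms(1) children_pos[OF assms(2)] by simp
qed

text \<open>Not sharp for h > 0 (there 2h^2 + 2 holds), but in this form it also covers h = 0,
where the two roots coincide and the hypotheses are contradictory.\<close>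

lemma disjoint_rooted_paths_length_le:
  assumes "q = l + h" "1 \<le> i" "subtree_path q l i p1" "subtree_path q l i p2" "set p1 \<inter> set p2 = {}"
    "hd p1 = canon q (s, l, i)" "hd p2 = canon q (other_side s, l, i)"
  shows "length p1 + length p2 \<le> 2 * h * (h + 1)"
proof (cases h)
  case 0
  then have "hd p1 = hd p2"
    using assms(1,6,7) by (simp add: canon_conv)
  with assms(3-5) show ?thesis
    by (metis disjoint_iff hd_in_set subtree_path_def)
next
  case (Suc h')
  then have "l < q"
    using assms(1) by simp
  then obtain x y where p: "p1 = (s, l, i) # x" "p2 = (other_side s, l, i) # y"
    using assms(3,4,6,7) by (cases p1; cases p2) (auto simp: subtree_path_def)
  have "length x \<le> (h' + 1)\<^sup>2"
    using branch_length_le[of q l h' i s x] Suc assms(1-5) p by auto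
  moreover have "length y \<le> (h' + 1)\<^sup>2"
    using branch_length_le[of q l h' i "other_side s" y] Suc assms(1-5) p by auto
  ultimately show ?thesis
    using p Suc by (simp add: power2_eq_square algebra_simps)
qed

lemma through_one_root_length_le:
  assumes "q = Suc l + h" "1 \<le> i" "subtree_path q l i (x @ (t, l, i) # y)"
    "(other_side t, l, i) \<notin> set (x @ y)"
  shows "length (x @ (t, l, i) # y) \<le> 2 * (h + 1)\<^sup>2 + 1"
proof -
  have "subtree_path q l i (x @ [(t, l, i)])"
    using subtree_path_infix[of q l i "[]"] assms(3) by simp
  then have "subtree_path q l i ((t, l, i) # rev x)"
    using subtree_path_rev[of q l i "x @ [(t, l, i)]"] by simp
  then have "length x \<le> (h + 1)\<^sup>2"
    using branch_length_le[OF assms(1,2), of t "rev x"] assms(4) by simp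
  moreover have "length y \<le> (h + 1)\<^sup>2"
    using branch_length_le[OF assms(1,2), of t y] subtree_path_infix[of q l i x _ "[]"] assms(3,4)
    by simp
  ultimately show ?thesis
    by simp
qed

lemma through_both_roots_length_le:
  assumes "q = Suc l + h" "1 \<le> i" "subtree_path q l i p"
    and p: "p = x @ (t, l, i) # z @ (other_side t, l, i) # y"
  shows "length p \<le> max 4 (2 * (h + 1)\<^sup>2 + 1)"
proof -
  have "l < q"
    using assms(1) by simp
  have "distinct p"
    using assms(3) by (simp add: subtree_path_def)
  have "subtree_path q l i ((t, l, i) # z @ [(other_side t, l, i)])"
    using subtree_path_infix[of q l i x _ y] assms(3) p by simp
  then obtain c where c: "c \<in> children i" "subtree_path q (Suc l) c z"
      "hd z = canon q (t, Suc l, c)" "last z = canon q (other_side t, Suc l, c)"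
    using subtree_path_between_roots[OF \<open>l < q\<close> assms(2)] by blast
  then have lz: "length z \<le> 2 * h + 1"
    using root_to_root_length_le[of q "Suc l" h c z t] assms(1) children_pos[OF assms(2)] by simp
  have "subtree_path q l i (x @ [(t, l, i)])"
    using subtree_path_infix[of q l i "[]" "x @ [(t, l, i)]"] assms(3) p by simp
  then have x: "subtree_path q l i ((t, l, i) # rev x)" "(other_side t, l, i) \<notin> set (rev x)"
    using subtree_path_rev[of q l i "x @ [(t, l, i)]"] \<open>distinct p\<close> p by simp_all
  have y: "subtree_path q l i ((other_side t, l, i) # y)" "(other_side (other_side t), l, i) \<notin> set y"
    using subtree_path_infix[of q l i "x @ (t, l, i) # z" _ "[]"] assms(3) p \<open>distinct p\<close> by simp_all
  have lx: "length x \<le> (h + 1)\<^sup>2"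
    using branch_length_le[OF assms(1,2) x] by simp
  have ly: "length y \<le> (h + 1)\<^sup>2"
    using branch_length_le[OF assms(1,2) y] by simp
  show ?thesis
  proof (cases "x = [] \<or> y = []")
    case True
    then have "length p \<le> (h + 1)\<^sup>2 + 2 * h + 3"
      using p lx ly lz by auto
    also have "\<dots> \<le> max 4 (2 * (h + 1)\<^sup>2 + 1)"
      by (cases h) (auto simp: power2_eq_square)
    finally show ?thesis .
  next
    case False
    obtain cx where cx: "cx \<in> children i" "subtree_path q (Suc l) cx (rev x)"
        "hd (rev x) = canon q (t, Suc l, cx)"
      using subtree_path_below_root[OF \<open>l < q\<close> assms(2) x(1)] x(2) False by auto
    obtain cy where cy: "cy \<in> children i" "subtree_path q (Suc l) cy y"
        "hd y = canon q (other_side t, Suc l, cy)"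
      using subtree_path_below_root[OF \<open>l < q\<close> assms(2) y(1)] y(2) False by auto
    have "z \<noteq> []"
      using c(2) by (simp add: subtree_path_def)
    have "set x \<inter> set z = {}" "set y \<inter> set z = {}"
      using \<open>distinct p\<close> p by auto
    then have "last x \<noteq> hd z" "hd y \<noteq> last z"
      using False \<open>z \<noteq> []\<close> by (metis disjoint_iff hd_in_set last_in_set)+
    then have "cx \<noteq> c" "cy \<noteq> c"
      using cx(3) cy(3) c(3,4) False by (auto simp: hd_rev)
    then have "cx = cy"
      using c(1) cx(1) cy(1) by (auto simp: children_def)
    then have "length (rev x) + length y \<le> 2 * h * (h + 1)"
      using disjoint_rooted_paths_length_le[of q "Suc l" h cx "rev x" y t] assms(1) cx cy
        children_pos[OF assms(2)] \<open>distinct p\<close> p by auto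
    then show ?thesis
      using p lz by (simp add: power2_eq_square algebra_simps)
  qed
qed

lemma subtree_path_length_le:
  assumes "q = l + h" "1 \<le> i" "subtree_path q l i p"
  shows "length p \<le> max 4 (2 * h\<^sup>2 + 1)"
  using assms
proof (induction h arbitrary: l i p)
  case 0
  then show ?case
    using subtree_path_leaf by fastforce
next
  case (Suc h)
  have "l < q" "q = Suc l + h"
    using Suc.prems(1) by simp_all
  consider "(Blue, l, i) \<notin> set p" "(Red, l, i) \<notin> set p"
    | t where "(t, l, i) \<in> set p" "(other_side t, l, i) \<notin> set p"
    | t where "(t, l, i) \<in> set p" "(other_side t, l, i) \<in> set p"
  proof (cases "(Blue, l, i) \<in> set p")
    case True
    then show thesis
      using that(2,3)[of Blue] by auto
  next
    case False
    then show thesis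
      using that(1) that(2)[of Red] by auto
  qed
  then show ?case
  proof cases
    case 1
    then obtain c where "c \<in> children i" "set p \<subseteq> subtree q (Suc l) c"
      using walk_below_roots[OF Suc.prems(2), of q p l] Suc.prems(3) by (auto simp: subtree_path_def)
    then have "length p \<le> max 4 (2 * h\<^sup>2 + 1)"
      using Suc.IH[of "Suc l" c p] Suc.prems children_pos[OF Suc.prems(2)] by (simp add: subtree_path_def)
    also have "\<dots> \<le> max 4 (2 * (Suc h)\<^sup>2 + 1)"
      by (rule max.mono) (auto simp: power2_eq_square)
    finally show ?thesis .
  next
    case (2 t)
    then obtain x y where "p = x @ (t, l, i) # y"
      by (meson split_list)
    then show ?thesis
      using through_one_root_length_le[OF \<open>q = Suc l + h\<close> Suc.prems(2), of x t y] Suc.prems(3) 2(2)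
      by simp
  next
    case (3 t)
    then obtain x w where p: "p = x @ (t, l, i) # w"
      by (meson split_list)
    show ?thesis
    proof (cases "(other_side t, l, i) \<in> set w")
      case True
      then obtain z y where "w = z @ (other_side t, l, i) # y"
        by (meson split_list)
      then show ?thesis
        using through_both_roots_length_le[OF \<open>q = Suc l + h\<close> Suc.prems(2,3)] p by simp
    next
      case False
      then obtain x1 x2 where "x = x1 @ (other_side t, l, i) # x2"
        using 3(2) p by (auto dest: split_list)
      then show ?thesis
        using through_both_roots_length_le[OF \<open>q = Suc l + h\<close> Suc.prems(2,3), of x1 "other_side t" x2 w]
          p by simp
    qed
  qed
qed

fun loop_path :: "nat \<Rightarrow> tree_side \<Rightarrow> nat \<Rightarrow> nat \<Rightarrow> mvert list" where
  "loop_path 0 s l i = [(Blue, l, i)]"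
| "loop_path (Suc h) s l i = (s, l, i) # loop_path h s (Suc l) (2 * i - 1) @ [(other_side s, l, i)]"

fun long_path :: "nat \<Rightarrow> tree_side \<Rightarrow> nat \<Rightarrow> nat \<Rightarrow> mvert list" where
  "long_path 0 s l i = [(Blue, l, i)]"
| "long_path (Suc h) s l i =
    (s, l, i) # loop_path h s (Suc l) (2 * i - 1) @ (other_side s, l, i) # long_path h (other_side s) (Suc l) (2 * i)"

lemma subtree_path_Cons_root:
  assumes "l < q" "1 \<le> i" "i \<le> 2 ^ l" "c \<in> children i" "subtree_path q (Suc l) c p"
    "hd p = canon q (s, Suc l, c)"
  shows "subtree_path q l i ((s, l, i) # p)"
  using assms subtree_child_subset[OF assms(2,4)] canon_mem_subtree[of l q i s]
    mirror_adj_downI[OF assms(1-4), of s]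
  by (auto simp: subtree_path_def successively_Cons)

lemma loop_path_props:
  assumes "q = l + h" "1 \<le> i" "i \<le> 2 ^ l"
  shows "subtree_path q l i (loop_path h s l i) \<and> hd (loop_path h s l i) = canon q (s, l, i)
    \<and> last (loop_path h s l i) = canon q (other_side s, l, i) \<and> length (loop_path h s l i) = 2 * h + 1"
  using assms
proof (induction h arbitrary: s l i)
  case 0
  then show ?case
    using canon_mem_subtree[of q q i Blue] by (simp add: canon_conv)
next
  case (Suc h)
  define c where "c = 2 * i - 1"
  have "l < q" "c \<in> children i"
    using Suc.prems by (simp_all add: c_def children_def)
  define A where "A = loop_path h s (Suc l) c"
  have A: "subtree_path q (Suc l) c A" "hd A = canon q (s, Suc l, c)"
      "last A = canon q (other_side s, Suc l, c)" "length A = 2 * h + 1"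
    using Suc.IH[of "Suc l" c s] Suc.prems children_pos[OF Suc.prems(2) \<open>c \<in> children i\<close>]
      children_le[OF Suc.prems(3) \<open>c \<in> children i\<close>] by (simp_all add: A_def)
  have "subtree_path q l i ((s, l, i) # A)"
    using subtree_path_Cons_root[OF \<open>l < q\<close> Suc.prems(2,3) \<open>c \<in> children i\<close> A(1,2)] .
  moreover have "subtree_path q l i ((other_side s, l, i) # rev A)"
    using subtree_path_Cons_root[OF \<open>l < q\<close> Suc.prems(2,3) \<open>c \<in> children i\<close>, of "rev A"] A(1,3)
    by (simp add: subtree_path_rev hd_rev)
  ultimately have "subtree_path q l i (((s, l, i) # A) @ [(other_side s, l, i)])"
    using A(1) by (auto simp: subtree_path_def successively_Cons successively_append_iff hd_rev mirror_adj_commute)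
  then show ?case
    using A \<open>l < q\<close> by (simp add: A_def c_def)
qed

lemma long_path_props:
  assumes "q = l + h" "1 \<le> i" "i \<le> 2 ^ l"
  shows "subtree_path q l i (long_path h s l i) \<and> hd (long_path h s l i) = canon q (s, l, i)
    \<and> length (long_path h s l i) = (h + 1)\<^sup>2"
  using assms
proof (induction h arbitrary: s l i)
  case 0
  then show ?case
    using canon_mem_subtree[of q q i Blue] by (simp add: canon_conv)
next
  case (Suc h)
  define c c' where "c = 2 * i - 1" and "c' = 2 * i"
  have "l < q" "c \<in> children i" "c' \<in> children i"
    using Suc.prems by (simp_all add: c_def c'_def children_def)
  define A B where "A = loop_path h s (Suc l) c" and "B = long_path h (other_side s) (Suc l) c'"
  have A: "subtree_path q (Suc l) c A" "hd A = canon q (s, Suc l, c)"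
      "last A = canon q (other_side s, Suc l, c)" "length A = 2 * h + 1"
    using loop_path_props[of q "Suc l" h c s] Suc.prems children_pos[OF Suc.prems(2) \<open>c \<in> children i\<close>]
      children_le[OF Suc.prems(3) \<open>c \<in> children i\<close>] by (simp_all add: A_def)
  have B: "subtree_path q (Suc l) c' B" "hd B = canon q (other_side s, Suc l, c')" "length B = (h + 1)\<^sup>2"
    using Suc.IH[of "Suc l" c' "other_side s"] Suc.prems children_pos[OF Suc.prems(2) \<open>c' \<in> children i\<close>]
      children_le[OF Suc.prems(3) \<open>c' \<in> children i\<close>] by (simp_all add: B_def)
  have disj: "subtree q (Suc l) c \<inter> subtree q (Suc l) c' = {}"
    using Suc.prems(2) by (intro subtree_disjoint) (simp_all add: c_def c'_def)
  have "subtree_path q l i ((s, l, i) # A)"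
    using subtree_path_Cons_root[OF \<open>l < q\<close> Suc.prems(2,3) \<open>c \<in> children i\<close> A(1,2)] .
  moreover have "subtree_path q l i ((other_side s, l, i) # B)"
    using subtree_path_Cons_root[OF \<open>l < q\<close> Suc.prems(2,3) \<open>c' \<in> children i\<close> B(1,2)] .
  moreover have "mirror_adj q (last A) (other_side s, l, i)"
    using mirror_adj_downI[OF \<open>l < q\<close> Suc.prems(2,3) \<open>c \<in> children i\<close>] A(3) mirror_adj_commute by metis
  ultimately have "subtree_path q l i (((s, l, i) # A) @ ((other_side s, l, i) # B))"
    using A(1) B(1) disj by (auto simp: subtree_path_def successively_Cons successively_append_iff)
  then show ?case
    using A B \<open>l < q\<close> by (simp add: A_def B_def c_def c'_def power2_eq_square)
qed

lemma mirror_path_len_le: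
  assumes "2 \<le> q" "mirror_path q p"
  shows "path_len p \<le> 2 * q\<^sup>2"
proof -
  have "length p \<le> max 4 (2 * q\<^sup>2 + 1)"
    using subtree_path_length_le[of q 0 q 1 p] assms(2) by (simp add: mirror_path_iff_subtree_path)
  moreover have "2 ^ 2 \<le> q\<^sup>2"
    using power_mono[OF assms(1), of 2] by simp
  ultimately show ?thesis
    by (simp add: path_len_def)
qed

lemma mirror_path_len_attained:
  assumes "1 \<le> q"
  shows "\<exists>p. mirror_path q p \<and> path_len p = 2 * q\<^sup>2"
proof -
  define P1 P2 where "P1 = long_path (q - 1) Blue 1 1" and "P2 = long_path (q - 1) Blue 1 2"
  have P1: "subtree_path q 1 1 P1" "hd P1 = canon q (Blue, 1, 1)" "length P1 = q\<^sup>2"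
    using long_path_props[of q 1 "q - 1" 1 Blue] assms by (simp_all add: P1_def)
  have P2: "subtree_path q 1 2 P2" "hd P2 = canon q (Blue, 1, 2)" "length P2 = q\<^sup>2"
    using long_path_props[of q 1 "q - 1" 2 Blue] assms by (simp_all add: P2_def)
  have children: "1 \<in> children 1" "2 \<in> children 1"
    by (simp_all add: children_def)
  have "subtree_path q 0 1 ((Blue, 0, 1) # P1)"
    using subtree_path_Cons_root[of 0 q 1 1 P1] assms P1 children by simp
  moreover have "subtree_path q 0 1 ((Blue, 0, 1) # P2)"
    using subtree_path_Cons_root[of 0 q 1 2 P2] assms P2 children by simp
  moreover have "subtree q 1 1 \<inter> subtree q 1 2 = {}"
    by (simp add: subtree_disjoint)
  ultimately have "subtree_path q 0 1 (rev P1 @ (Blue, 0, 1) # P2)"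
    using P1(1) P2(1)
    by (auto simp: subtree_path_def successively_Cons successively_append_iff last_rev mirror_adj_commute)
  moreover have "path_len (rev P1 @ (Blue, 0, 1) # P2) = 2 * q\<^sup>2"
    using P1(3) P2(3) by (simp add: path_len_def)
  ultimately show ?thesis
    by (auto simp: mirror_path_iff_subtree_path)
qed

theorem mainTheorem19:
  fixes q :: nat
  assumes "q \<ge> 3"
  shows "Max (path_len ` {p. mirror_path q p}) = 2 * q ^ 2"
proof (rule Max_eqI)
  have "{p. mirror_path q p} \<subseteq> {xs. set xs \<subseteq> mirror_verts q \<and> distinct xs}"
    by (auto simp: mirror_path_def)
  then show "finite (path_len ` {p. mirror_path q p})"
    using finite_subset_distinct[OF finite_mirror_verts] finite_subset by blast
  show "y \<le> 2 * q ^ 2" if "y \<in> path_len ` {p. mirror_path q p}" for y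
    using that mirror_path_len_le assms by auto
  obtain p where "mirror_path q p" "path_len p = 2 * q ^ 2"
    using mirror_path_len_attained[of q] assms by auto
  then show "2 * q ^ 2 \<in> path_len ` {p. mirror_path q p}"
    by (metis image_eqI mem_Collect_eq)
qed

end
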